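(* Let $B$ be any group and $p\ge 2$ an integer. If $w\in(B\wr C_p)'$, then $w$ can be written in wreath-recursion form as $$w=\Big(r_1,r_2,\dots,r_{p-1},\ r_1^{-1}\cdots r_{p-1}^{-1}\prod_{j=1}^{k}[f_j,g_j]\Big),$$ where $r_1,\dots,r_{p-1},f_j,g_j\in B$ and $k\le cw(B)$.
   Context: $B\wr C_p=B^p\rtimes C_p$ with $C_p$ acting on $\{1,\dots,p\}$ by cyclic shifts; elements are written $(g_1,\dots,g_p)\pi$ with multiplication $(g_1,\dots,g_p)\pi\cdot(h_1,\dots,h_p)\tau=(g_1h_{\pi(1)},\dots,g_ph_{\pi(p)})\pi\tau$. $[a,b]=aba^{-1}b^{-1}$. The commutator width $cw(G)$ of a group $G$ is the least $n$ such that every element of $G'$ is a product of at most $n$ commutators ($\infty$ if no such $n$ exists). *)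

theory Defs
  imports "HOL-Algebra.Algebra" "HOL-Library.Extended_Nat" "HOL-Library.FuncSet"
begin

text \<open>Commutator [a,b] = a b a^-1 b^-1 (same convention as derived_set in HOL-Algebra).\<close>
definition commutator :: "('a, 'b) monoid_scheme \<Rightarrow> 'a \<Rightarrow> 'a \<Rightarrow> 'a" where
  "commutator G a b = a \<otimes>\<^bsub>G\<^esub> b \<otimes>\<^bsub>G\<^esub> inv\<^bsub>G\<^esub> a \<otimes>\<^bsub>G\<^esub> inv\<^bsub>G\<^esub> b"

definition prod_listG :: "('a, 'b) monoid_scheme \<Rightarrow> 'a list \<Rightarrow> 'a" where
  "prod_listG G xs = foldr (\<lambda>x acc. x \<otimes>\<^bsub>G\<^esub> acc) xs \<one>\<^bsub>G\<^esub>"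

definition comm_prod :: "('a, 'b) monoid_scheme \<Rightarrow> ('a \<times> 'a) list \<Rightarrow> 'a" where
  "comm_prod G cs = prod_listG G (map (\<lambda>(f, g). commutator G f g) cs)"

definition cw_bound :: "('a, 'b) monoid_scheme \<Rightarrow> nat \<Rightarrow> bool" where
  "cw_bound G n \<longleftrightarrow> (\<forall>x \<in> derived G (carrier G). \<exists>cs. length cs \<le> n \<and>
      set cs \<subseteq> carrier G \<times> carrier G \<and> x = comm_prod G cs)"

definition commutator_width :: "('a, 'b) monoid_scheme \<Rightarrow> enat" where
  "commutator_width G = (if \<exists>n. cw_bound G n then enat (LEAST n. cw_bound G n) else \<infinity>)"

text \<open>Element (g, a) stands for (g_0,...,g_{p-1}) \<pi>
  with \<pi> the cyclic shift i \<mapsto> i + a mod p. Coordinates are indexed by {0..<p}.\<close>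
definition wreath :: "('a, 'b) monoid_scheme \<Rightarrow> nat \<Rightarrow> ((nat \<Rightarrow> 'a) \<times> nat) monoid" where
  "wreath B p = \<lparr> carrier = ({0..<p} \<rightarrow>\<^sub>E carrier B) \<times> {0..<p},
      monoid.mult = (\<lambda>x y. ((\<lambda>i\<in>{0..<p}. fst x i \<otimes>\<^bsub>B\<^esub> fst y ((i + snd x) mod p)),
                        (snd x + snd y) mod p)),
      one = ((\<lambda>i\<in>{0..<p}. \<one>\<^bsub>B\<^esub>), 0) \<rparr>"

end

theory Submission
  imports Defs
begin

(*
  Both the shift w = (g_0, ..., g_(p-1)) \<pi> \<mapsto> \<pi> and the map sending w to the image of
  g_0 \<cdot> ... \<cdot> g_(p-1) in the abelianisation B/B' are homomorphisms into abelian groups (the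
  latter because the shift only permutes the coordinates), so both vanish on the derived subgroup.
  Hence w \<in> (B wr C_p)' has trivial shift, and with r_i = g_i for i < p - 1 the correction
  c = (r_0\<inverse> ... r_(p-2)\<inverse>)\<inverse> g_(p-1) has the same image in B/B' as g_0 ... g_(p-1), namely 1.
  So c \<in> B' is a product of at most cw(B) commutators.
*)

lemma carrier_wreath: "carrier (wreath B p) = ({0..<p} \<rightarrow>\<^sub>E carrier B) \<times> {0..<p}"
  and mult_wreath: "x \<otimes>\<^bsub>wreath B p\<^esub> y = ((\<lambda>i\<in>{0..<p}. fst x i \<otimes>\<^bsub>B\<^esub> fst y ((i + snd x) mod p)),
                        (snd x + snd y) mod p)"
  and one_wreath: "\<one>\<^bsub>wreath B p\<^esub> = ((\<lambda>i\<in>{0..<p}. \<one>\<^bsub>B\<^esub>), 0)"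
  by (simp_all add: wreath_def)

lemma group_wreath:
  assumes "group B" and "p > 0"
  shows "group (wreath B p)"
proof -
  interpret B: group B by fact
  show ?thesis
  proof (rule groupI)
    fix x y z
    assume "x \<in> carrier (wreath B p)" "y \<in> carrier (wreath B p)" "z \<in> carrier (wreath B p)"
    then show "x \<otimes>\<^bsub>wreath B p\<^esub> y \<otimes>\<^bsub>wreath B p\<^esub> z = x \<otimes>\<^bsub>wreath B p\<^esub> (y \<otimes>\<^bsub>wreath B p\<^esub> z)"
      by (auto simp: carrier_wreath mult_wreath PiE_def Pi_def B.m_assoc mod_simps add.assoc)
  next
    fix x assume x: "x \<in> carrier (wreath B p)"
    define b where "b = (p - snd x) mod p"
    have "((\<lambda>i\<in>{0..<p}. inv\<^bsub>B\<^esub> fst x ((i + b) mod p)), b) \<in> carrier (wreath B p)"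
      and "((\<lambda>i\<in>{0..<p}. inv\<^bsub>B\<^esub> fst x ((i + b) mod p)), b) \<otimes>\<^bsub>wreath B p\<^esub> x = \<one>\<^bsub>wreath B p\<^esub>"
      using x \<open>p > 0\<close> by (auto simp: b_def carrier_wreath mult_wreath one_wreath PiE_def Pi_def
          mod_simps)
    then show "\<exists>y\<in>carrier (wreath B p). y \<otimes>\<^bsub>wreath B p\<^esub> x = \<one>\<^bsub>wreath B p\<^esub>" by blast
  qed (use \<open>p > 0\<close> in \<open>auto simp: carrier_wreath mult_wreath one_wreath PiE_def Pi_def
      extensional_def\<close>)
qed

lemma hom_derived_eq_one:
  assumes "group G" and "comm_group A" and "f \<in> hom G A"
    and "x \<in> derived G (carrier G)"
  shows "f x = \<one>\<^bsub>A\<^esub>"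
proof -
  interpret f: group_hom G A f
    using assms(1-3) by (simp add: group_hom_def group_hom_axioms_def comm_group.axioms(2))
  interpret A: comm_group A by fact
  have "f x \<in> derived A (f ` carrier G)"
    using f.derived_img[of "carrier G"] assms(4) by simp
  moreover have "f ` carrier G \<subseteq> carrier A" by auto
  ultimately show ?thesis using A.derived_eq_singleton by blast
qed

lemma comm_group_integer_mod_group: "comm_group (integer_mod_group n)"
  by (rule group.group_comm_groupI) (simp_all add: add.commute)

lemma shift_hom_wreath:
  assumes "p > 0"
  shows "(\<lambda>w. int (snd w)) \<in> hom (wreath B p) (integer_mod_group p)"
  using assms by (auto simp: hom_def carrier_wreath mult_wreath carrier_integer_mod_group zmod_int)

lemma bij_betw_add_mod: "bij_betw (\<lambda>i. (i + a) mod p) {..<p} {..<(p::nat)}"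
proof -
  have "inj_on (\<lambda>i. (i + a) mod p) {..<p}"
  proof (rule inj_onI)
    fix i j assume "i \<in> {..<p}" "j \<in> {..<p}" and "(i + a) mod p = (j + a) mod p"
    then have "(int i + int a) mod int p = (int j + int a) mod int p"
      by (metis of_nat_add zmod_int)
    then have "int i mod int p = int j mod int p" by (simp add: mod_eq_dvd_iff)
    with \<open>i \<in> {..<p}\<close> \<open>j \<in> {..<p}\<close> show "i = j" by simp
  qed
  moreover have "(\<lambda>i. (i + a) mod p) ` {..<p} \<subseteq> {..<p}" by auto
  ultimately show ?thesis by (simp add: bij_betw_def endo_inj_surj)
qed

lemma coordinate_product_hom_wreath:
  assumes "group B" and "comm_group Q" and "h \<in> hom B Q"
  shows "(\<lambda>w. finprod Q (\<lambda>i. h (fst w i)) {..<p}) \<in> hom (wreath B p) Q"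
proof -
  interpret Q: comm_group Q by fact
  have hc: "(\<lambda>i. h (fst x i)) \<in> {..<p} \<rightarrow> carrier Q" if "x \<in> carrier (wreath B p)" for x
    using that hom_in_carrier[OF assms(3)] by (auto simp: carrier_wreath PiE_iff)
  show ?thesis
  proof (rule homI)
    fix x y assume x: "x \<in> carrier (wreath B p)" and y: "y \<in> carrier (wreath B p)"
    let ?s = "\<lambda>i. (i + snd x) mod p"
    have hs: "(\<lambda>i. h (fst y (?s i))) \<in> {..<p} \<rightarrow> carrier Q"
      using hc[OF y] by (auto simp: Pi_def)
    have "finprod Q (\<lambda>i. h (fst (x \<otimes>\<^bsub>wreath B p\<^esub> y) i)) {..<p}
        = finprod Q (\<lambda>i. h (fst x i) \<otimes>\<^bsub>Q\<^esub> h (fst y (?s i))) {..<p}"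
    proof (rule Q.finprod_cong')
      fix i assume "i \<in> {..<p}"
      then have "?s i < p" by simp
      with \<open>i \<in> {..<p}\<close> show "h (fst (x \<otimes>\<^bsub>wreath B p\<^esub> y) i) = h (fst x i) \<otimes>\<^bsub>Q\<^esub> h (fst y (?s i))"
        using x y hom_mult[OF assms(3)] by (auto simp: carrier_wreath mult_wreath PiE_iff)
    qed (use hc[OF x] hs in \<open>auto simp: Pi_def\<close>)
    also have "\<dots> = finprod Q (\<lambda>i. h (fst x i)) {..<p} \<otimes>\<^bsub>Q\<^esub> finprod Q (\<lambda>i. h (fst y (?s i))) {..<p}"
      using hc[OF x] hs by (rule Q.finprod_multf)
    also have "finprod Q (\<lambda>i. h (fst y (?s i))) {..<p} = finprod Q (\<lambda>i. h (fst y i)) {..<p}"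
      using Q.finprod_reindex[of "\<lambda>i. h (fst y i)" ?s "{..<p}"] hc[OF y] bij_betw_add_mod[of "snd x" p]
      by (simp add: bij_betw_def)
    finally show "finprod Q (\<lambda>i. h (fst (x \<otimes>\<^bsub>wreath B p\<^esub> y) i)) {..<p}
        = finprod Q (\<lambda>i. h (fst x i)) {..<p} \<otimes>\<^bsub>Q\<^esub> finprod Q (\<lambda>i. h (fst y i)) {..<p}" .
  qed (use hc in auto)
qed

lemma prod_listG_closed:
  assumes "group B" and "set xs \<subseteq> carrier B"
  shows "prod_listG B xs \<in> carrier B"
proof -
  interpret B: group B by fact
  show ?thesis using assms(2) by (induction xs) (auto simp: prod_listG_def)
qed

lemma prod_listG_append:
  assumes "group B" and "set xs \<subseteq> carrier B" and "set ys \<subseteq> carrier B"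
  shows "prod_listG B (xs @ ys) = prod_listG B xs \<otimes>\<^bsub>B\<^esub> prod_listG B ys"
proof -
  interpret B: group B by fact
  show ?thesis
    using assms(2) prod_listG_closed[OF assms(1)] assms(3)
    by (induction xs) (auto simp: prod_listG_def B.m_assoc)
qed

lemma hom_prod_listG_upt:
  assumes "group B" and "comm_group Q" and "h \<in> hom B Q" and "f \<in> {..<n} \<rightarrow> carrier B"
  shows "h (prod_listG B (map f [0..<n])) = finprod Q (\<lambda>i. h (f i)) {..<n}"
proof -
  interpret Q: comm_group Q by fact
  interpret h: group_hom B Q h
    using assms(1,3) by (simp add: group_hom_def group_hom_axioms_def)
  show ?thesis
    using assms(4)
  proof (induction n)
    case 0
    show ?case by (simp add: prod_listG_def)
  next
    case (Suc n)
    have f: "f \<in> {..<n} \<rightarrow> carrier B" and fn: "f n \<in> carrier B" using Suc.prems by auto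
    then have fs: "set (map f [0..<n]) \<subseteq> carrier B" by (auto simp: Pi_def)
    have "prod_listG B (map f [0..<Suc n]) = prod_listG B (map f [0..<n]) \<otimes>\<^bsub>B\<^esub> prod_listG B [f n]"
      using fs fn by (simp add: prod_listG_append[OF assms(1)])
    also have "prod_listG B [f n] = f n" using fn by (simp add: prod_listG_def)
    finally have "h (prod_listG B (map f [0..<Suc n])) = h (prod_listG B (map f [0..<n])) \<otimes>\<^bsub>Q\<^esub> h (f n)"
      using prod_listG_closed[OF assms(1) fs] fn by simp
    also have "\<dots> = h (f n) \<otimes>\<^bsub>Q\<^esub> finprod Q (\<lambda>i. h (f i)) {..<n}"
      using Suc.IH[OF f] f fn by (simp add: Q.m_comm[of "h (f n)"] Pi_def)
    also have "\<dots> = finprod Q (\<lambda>i. h (f i)) {..<Suc n}"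
      using f fn by (simp add: lessThan_Suc Pi_def)
    finally show ?case .
  qed
qed

lemma derived_is_comm_prod:
  assumes "group B" and "x \<in> derived B (carrier B)"
  shows "\<exists>cs. set cs \<subseteq> carrier B \<times> carrier B \<and> x = comm_prod B cs"
proof -
  interpret B: group B by fact
  from assms(2) show ?thesis unfolding derived_def
  proof (induction rule: generate.induct)
    case one
    show ?case by (intro exI[of _ "[]"]) (simp add: comm_prod_def prod_listG_def)
  next
    case (incl h)
    then obtain a b where "a \<in> carrier B" "b \<in> carrier B" "h = commutator B a b"
      by (auto simp: commutator_def)
    then show ?case by (intro exI[of _ "[(a, b)]"]) (simp add: comm_prod_def prod_listG_def commutator_def)
  next
    case (inv h)
    then obtain a b where ab: "a \<in> carrier B" "b \<in> carrier B" "h = commutator B a b"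
      by (auto simp: commutator_def)
    then have "inv\<^bsub>B\<^esub> h = commutator B b a"
      by (simp add: commutator_def B.inv_mult_group B.m_assoc)
    then show ?case using ab
      by (intro exI[of _ "[(b, a)]"]) (simp add: comm_prod_def prod_listG_def commutator_def)
  next
    case (eng h1 h2)
    then obtain cs1 cs2 where cs: "set cs1 \<subseteq> carrier B \<times> carrier B" "h1 = comm_prod B cs1"
      "set cs2 \<subseteq> carrier B \<times> carrier B" "h2 = comm_prod B cs2" by blast
    have "comm_prod B (cs1 @ cs2) = comm_prod B cs1 \<otimes>\<^bsub>B\<^esub> comm_prod B cs2"
      unfolding comm_prod_def map_append using cs(1,3)
      by (intro prod_listG_append[OF assms(1)]) (auto simp: commutator_def)
    then show ?case using cs by (intro exI[of _ "cs1 @ cs2"]) auto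
  qed
qed

lemma derived_is_comm_prod_within_width:
  assumes "group B" and "x \<in> derived B (carrier B)"
  shows "\<exists>cs. set cs \<subseteq> carrier B \<times> carrier B \<and> enat (length cs) \<le> commutator_width B
    \<and> x = comm_prod B cs"
proof (cases "\<exists>n. cw_bound B n")
  case True
  then have "cw_bound B (LEAST n. cw_bound B n)" by (rule LeastI_ex)
  moreover have "commutator_width B = enat (LEAST n. cw_bound B n)"
    using True by (simp add: commutator_width_def)
  ultimately show ?thesis using assms(2) unfolding cw_bound_def by fastforce
next
  case False
  then show ?thesis using derived_is_comm_prod[OF assms] by (simp add: commutator_width_def)
qed

lemma wreath_derived_shift_eq_0:
  assumes "group B" and "p > 0" and "w \<in> derived (wreath B p) (carrier (wreath B p))"
  shows "snd w = 0"
  using hom_derived_eq_one[OF group_wreath[OF assms(1,2)] comm_group_integer_mod_group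
      shift_hom_wreath[OF assms(2)] assms(3)]
  by simp

lemma hom_inv_prod_listG_inv_upt:
  assumes "group B" and "comm_group Q" and "h \<in> hom B Q" and "f \<in> {..<n} \<rightarrow> carrier B"
  shows "h (inv\<^bsub>B\<^esub> prod_listG B (map (\<lambda>j. inv\<^bsub>B\<^esub> f j) [0..<n])) = finprod Q (\<lambda>i. h (f i)) {..<n}"
proof -
  interpret B: group B by fact
  interpret Q: comm_group Q by fact
  interpret h: group_hom B Q h
    using assms(1,3) by (simp add: group_hom_def group_hom_axioms_def)
  have f: "f i \<in> carrier B" if "i < n" for i using assms(4) that by auto
  define P where "P = prod_listG B (map (\<lambda>j. inv\<^bsub>B\<^esub> f j) [0..<n])"
  have P: "P \<in> carrier B" using f by (auto simp: P_def intro!: prod_listG_closed[OF assms(1)])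
  have "h P = finprod Q (\<lambda>i. h (inv\<^bsub>B\<^esub> f i)) {..<n}"
    using hom_prod_listG_upt[OF assms(1-3), of "\<lambda>j. inv\<^bsub>B\<^esub> f j"] f by (simp add: P_def)
  also have "\<dots> = finprod Q (\<lambda>i. inv\<^bsub>Q\<^esub> h (f i)) {..<n}"
    using f by (intro Q.finprod_cong') auto
  finally have "finprod Q (\<lambda>i. h (f i)) {..<n} \<otimes>\<^bsub>Q\<^esub> h P
      = finprod Q (\<lambda>i. h (f i) \<otimes>\<^bsub>Q\<^esub> inv\<^bsub>Q\<^esub> h (f i)) {..<n}"
    using f by (simp add: Pi_def)
  also have "\<dots> = \<one>\<^bsub>Q\<^esub>" using f by (intro Q.finprod_one_eqI) auto
  finally have "inv\<^bsub>Q\<^esub> h P = finprod Q (\<lambda>i. h (f i)) {..<n}"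
    using P f by (intro Q.inv_equality) (auto simp: Pi_def)
  then show ?thesis using P by (simp add: P_def)
qed

lemma wreath_derived_last_coordinate:
  assumes "group B" and "p > 0" and "w \<in> derived (wreath B p) (carrier (wreath B p))"
  shows "inv\<^bsub>B\<^esub> prod_listG B (map (\<lambda>j. inv\<^bsub>B\<^esub> fst w j) [0..<p - 1]) \<otimes>\<^bsub>B\<^esub> fst w (p - 1)
    \<in> derived B (carrier B)"
    (is "?c \<in> derived B (carrier B)")
proof -
  interpret B: group B by fact
  define N where "N = derived B (carrier B)"
  define Q where "Q = B Mod N"
  interpret N: normal N B unfolding N_def by (rule B.derived_self_is_normal)
  have Q: "comm_group Q" unfolding Q_def N_def by (rule B.derived_quot_is_comm_group)
  interpret Q: comm_group Q by (rule Q)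
  have h: "(\<lambda>a. N #>\<^bsub>B\<^esub> a) \<in> hom B Q" unfolding Q_def by (rule N.r_coset_hom_Mod)
  interpret h: group_hom B Q "\<lambda>a. N #>\<^bsub>B\<^esub> a"
    using h by (simp add: group_hom_def group_hom_axioms_def)
  have "w \<in> carrier (wreath B p)"
    using group.derived_in_carrier[OF group_wreath[OF assms(1,2)]] assms(3) by blast
  then have g: "fst w i \<in> carrier B" if "i < p" for i
    using that by (auto simp: carrier_wreath PiE_iff)
  have "prod_listG B (map (\<lambda>j. inv\<^bsub>B\<^esub> fst w j) [0..<p - 1]) \<in> carrier B"
    using g by (auto intro!: prod_listG_closed[OF assms(1)])
  then have c: "?c \<in> carrier B" using g assms(2) by simp
  have "N #>\<^bsub>B\<^esub> ?c = finprod Q (\<lambda>i. N #>\<^bsub>B\<^esub> fst w i) {..<p - 1} \<otimes>\<^bsub>Q\<^esub> (N #>\<^bsub>B\<^esub> fst w (p - 1))"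
    using hom_inv_prod_listG_inv_upt[OF assms(1) Q h, of "fst w" "p - 1"] g assms(2)
    by (simp add: prod_listG_closed[OF assms(1)] image_subset_iff)
  also have "\<dots> = finprod Q (\<lambda>i. N #>\<^bsub>B\<^esub> fst w i) {..<p}"
    using g assms(2) lessThan_Suc[of "p - 1"] by (simp add: Pi_def Q.m_comm)
  also have "\<dots> = \<one>\<^bsub>Q\<^esub>"
    using hom_derived_eq_one[OF group_wreath[OF assms(1,2)] Q
        coordinate_product_hom_wreath[OF assms(1) Q h] assms(3)] by simp
  finally show ?thesis
    using B.coset_join1[OF _ c N.subgroup_axioms] by (simp add: Q_def N_def)
qed

theorem lemma2:
  fixes B :: "('a, 'b) monoid_scheme" and p :: nat and w :: "(nat \<Rightarrow> 'a) \<times> nat"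
  assumes "group B" and "p \<ge> 2"
    and "w \<in> derived (wreath B p) (carrier (wreath B p))"
  shows "\<exists>r cs. (\<forall>i < p - 1. r i \<in> carrier B)
     \<and> set cs \<subseteq> carrier B \<times> carrier B
     \<and> enat (length cs) \<le> commutator_width B
     \<and> w = ((\<lambda>i\<in>{0..<p}. if i < p - 1 then r i
              else prod_listG B (map (\<lambda>j. inv\<^bsub>B\<^esub> r j) [0..<p - 1]) \<otimes>\<^bsub>B\<^esub> comm_prod B cs), 0)"
proof -
  interpret B: group B by fact
  have p: "p > 0" using assms(2) by simp
  define r where "r = fst w"
  define P where "P = prod_listG B (map (\<lambda>j. inv\<^bsub>B\<^esub> r j) [0..<p - 1])"
  have "w \<in> carrier (wreath B p)"
    using group.derived_in_carrier[OF group_wreath[OF assms(1) p]] assms(3) by blast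
  then have r: "r \<in> {0..<p} \<rightarrow>\<^sub>E carrier B" by (simp add: r_def carrier_wreath mem_Times_iff)
  then have P: "P \<in> carrier B" by (auto simp: P_def PiE_iff intro!: prod_listG_closed[OF assms(1)])
  obtain cs where cs: "set cs \<subseteq> carrier B \<times> carrier B" "enat (length cs) \<le> commutator_width B"
    and c: "inv\<^bsub>B\<^esub> P \<otimes>\<^bsub>B\<^esub> r (p - 1) = comm_prod B cs"
    using derived_is_comm_prod_within_width[OF assms(1) wreath_derived_last_coordinate[OF assms(1) p
          assms(3)]] by (auto simp: P_def r_def)
  have "r (p - 1) = P \<otimes>\<^bsub>B\<^esub> comm_prod B cs"
    using c[symmetric] P r p by (simp add: B.m_assoc[symmetric] PiE_iff)
  then have "r i = (\<lambda>i\<in>{0..<p}. if i < p - 1 then r i else P \<otimes>\<^bsub>B\<^esub> comm_prod B cs) i" for i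
    using r by (cases "i = p - 1") (auto simp: PiE_def extensional_def)
  moreover have "snd w = 0" by (rule wreath_derived_shift_eq_0[OF assms(1) p assms(3)])
  ultimately show ?thesis
    using r cs unfolding P_def r_def by (intro exI[of _ "fst w"] exI[of _ cs]) (auto simp: prod_eq_iff)
qed

end
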